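(* Let $\alpha>-1$, $0\le\gamma<2+\alpha$, $\beta\in\{0,1/3\}$, and let $\sigma$ be a weight on $\mathcal H$. There is a constant $C>0$ (independent of $f$ and $\lambda$) such that for every $f$ and every $\lambda>0$, $$|\{z\in\mathcal H:\mathcal M^{d,\beta}_{\sigma,\alpha,\gamma}f(z)>\lambda\}|_{\sigma,\alpha}\le C\left(\frac1\lambda\int_{\mathcal H}|f|\sigma\,dV_\alpha\right)^{\frac{2+\alpha}{2+\alpha-\gamma}}.$$
   Context: $\mathcal H=\{x+iy:x\in\mathbb R,\ y>0\}$; for $\alpha>-1$, $dV_\alpha(x+iy)=y^\alpha dx\,dy$. A weight is a nonnegative locally integrable function; $|E|_{\sigma,\alpha}=\int_E\sigma dV_\alpha$. For an interval $I$, $Q_I=\{x+iy:x\in I,0<y<|I|\}$. For $\beta\in\{0,1/3\}$, the dyadic grid is $\mathcal D^\beta=\{2^j([0,1)+m+(-1)^j\beta): m\in\mathbb Z, j\in\mathbb Z\}$. The dyadic weighted fractional maximal function is $\mathcal M^{d,\beta}_{\sigma,\alpha,\gamma}f(z)=\sup_{I\in\mathcal D^\beta,\ z\in Q_I}\frac{1}{|Q_I|_{\sigma,\alpha}^{1-\frac{\gamma}{2+\alpha}}}\int_{Q_I}|f|\sigma\,dV_\alpha$. *)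

theory Defs
  imports "HOL-Analysis.Analysis"
begin

definition upper_half :: "complex set" where
  "upper_half = {z. 0 < Im z}"

text \<open>Real power on extended nonnegative reals (exponent p > 0 in all uses):
  infinity goes to infinity, finite values use real powr (with 0 powr p = 0).\<close>
definition ennpow :: "ennreal \<Rightarrow> real \<Rightarrow> ennreal" where
  "ennpow x p = (if x = top then top else ennreal (enn2real x powr p))"

definition is_weight :: "(complex \<Rightarrow> real) \<Rightarrow> bool" where
  "is_weight \<sigma> \<longleftrightarrow> \<sigma> \<in> borel_measurable lborel \<and> (\<forall>z\<in>upper_half. 0 \<le> \<sigma> z) \<and>
     (\<forall>K. compact K \<and> K \<subseteq> upper_half \<longrightarrow> set_integrable lborel K \<sigma>)"

definition wmeas :: "real \<Rightarrow> (complex \<Rightarrow> real) \<Rightarrow> complex set \<Rightarrow> ennreal" where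
  "wmeas \<alpha> \<sigma> E = (\<integral>\<^sup>+ z. ennreal (\<sigma> z * Im z powr \<alpha>) * indicator (E \<inter> upper_half) z \<partial>lborel)"

definition wint :: "real \<Rightarrow> (complex \<Rightarrow> real) \<Rightarrow> (complex \<Rightarrow> real) \<Rightarrow> complex set \<Rightarrow> ennreal" where
  "wint \<alpha> \<sigma> f E = (\<integral>\<^sup>+ z. ennreal (\<bar>f z\<bar> * \<sigma> z * Im z powr \<alpha>) * indicator (E \<inter> upper_half) z \<partial>lborel)"

definition dyadic_grid :: "real \<Rightarrow> real set set" where
  "dyadic_grid \<beta> = {{2 powr j * (of_int m + (-1) powi j * \<beta>) ..< 2 powr j * (of_int m + 1 + (-1) powi j * \<beta>)}
                     | j m :: int. True}"

definition carleson_box :: "real set \<Rightarrow> complex set" where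
  "carleson_box I = {z. Re z \<in> I \<and> 0 < Im z \<and> Im z < measure lborel I}"

definition dyadic_max :: "real \<Rightarrow> (complex \<Rightarrow> real) \<Rightarrow> real \<Rightarrow> real \<Rightarrow> (complex \<Rightarrow> real) \<Rightarrow> complex \<Rightarrow> ennreal" where
  "dyadic_max \<beta> \<sigma> \<alpha> \<gamma> f z =
     (SUP I \<in> {I \<in> dyadic_grid \<beta>. z \<in> carleson_box I}.
        wint \<alpha> \<sigma> f (carleson_box I) / ennpow (wmeas \<alpha> \<sigma> (carleson_box I)) (1 - \<gamma> / (2 + \<alpha>)))"

end

theory Submission imports Defs begin

text \<open>
  Write \<open>\<parallel>f\<parallel> = \<integral> |f|\<sigma> dV\<^sub>\<alpha>\<close> and \<open>p = 1 - \<gamma>/(2+\<alpha>)\<close>. The superlevel set \<open>E\<close> of the dyadic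
  maximal function is the union of the dyadic Carleson boxes \<open>Q\<close> on which the fractional average
  of \<open>|f|\<close> exceeds \<open>\<lambda>\<close>. For such a box \<open>|Q|\<^sup>p < \<lambda>\<^sup>-\<^sup>1 \<integral>\<^sub>Q |f|\<sigma> dV\<^sub>\<alpha> \<le> \<parallel>f\<parallel>/\<lambda>\<close>, and splitting
  \<open>|Q| = |Q|\<^sup>p |Q|\<^sup>1\<^sup>-\<^sup>p\<close> gives \<open>|Q| \<le> K \<integral>\<^sub>Q |f|\<sigma> dV\<^sub>\<alpha>\<close> with \<open>K = (\<parallel>f\<parallel>/\<lambda>)\<^sup>1\<^sup>/\<^sup>p\<^sup>-\<^sup>1/\<lambda>\<close>.
  For \<open>\<beta> \<in> {0, 1/3}\<close> the grid is nested, so two dyadic Carleson boxes are disjoint or one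
  contains the other; among boxes of bounded size the maximal ones are disjoint and cover,
  and summing over them gives \<open>|E| \<le> K \<parallel>f\<parallel> = (\<parallel>f\<parallel>/\<lambda>)\<^sup>1\<^sup>/\<^sup>p\<close>. Monotone convergence removes
  the size bound, so \<open>C = 1\<close> works.
\<close>

definition dyadic_shift :: "real \<Rightarrow> int \<Rightarrow> real" where
  "dyadic_shift \<beta> j = (-1) powi j * \<beta>"

definition dyadic_interval :: "real \<Rightarrow> int \<Rightarrow> int \<Rightarrow> real set" where
  "dyadic_interval \<beta> j m =
     {2 powr j * (of_int m + dyadic_shift \<beta> j) ..< 2 powr j * (of_int m + 1 + dyadic_shift \<beta> j)}"

definition dyadic_index :: "real \<Rightarrow> int \<Rightarrow> real \<Rightarrow> int" where
  "dyadic_index \<beta> j x = \<lfloor>x / 2 powr j - dyadic_shift \<beta> j\<rfloor>"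

definition dyadic_box :: "real \<Rightarrow> int \<Rightarrow> int \<Rightarrow> complex set" where
  "dyadic_box \<beta> j m = carleson_box (dyadic_interval \<beta> j m)"

lemma dyadic_grid_eq: "dyadic_grid \<beta> = {dyadic_interval \<beta> j m | j m. True}"
  unfolding dyadic_grid_def dyadic_interval_def dyadic_shift_def by simp

lemma mem_dyadic_interval_iff: "x \<in> dyadic_interval \<beta> j m \<longleftrightarrow> dyadic_index \<beta> j x = m"
proof -
  have "x \<in> dyadic_interval \<beta> j m \<longleftrightarrow>
      of_int m \<le> x / 2 powr j - dyadic_shift \<beta> j \<and> x / 2 powr j - dyadic_shift \<beta> j < of_int m + 1"
    unfolding dyadic_interval_def by (auto simp: field_simps)
  then show ?thesis
    unfolding dyadic_index_def by (simp add: floor_eq_iff)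
qed

lemma measure_dyadic_interval: "measure lborel (dyadic_interval \<beta> j m) = 2 powr j"
  unfolding dyadic_interval_def by (simp add: algebra_simps)

lemma mem_dyadic_box_iff:
  "z \<in> dyadic_box \<beta> j m \<longleftrightarrow> dyadic_index \<beta> j (Re z) = m \<and> 0 < Im z \<and> Im z < 2 powr j"
  unfolding dyadic_box_def carleson_box_def measure_dyadic_interval mem_dyadic_interval_iff
  by simp

lemma dyadic_box_sets [measurable]: "dyadic_box \<beta> j m \<in> sets borel"
  unfolding dyadic_box_def carleson_box_def dyadic_interval_def by measurable

lemma dyadic_box_subset_upper_half: "dyadic_box \<beta> j m \<subseteq> upper_half"
  unfolding upper_half_def by (auto simp: mem_dyadic_box_iff)

text \<open>
  Passing from level \<open>j\<close> to \<open>j + 1\<close> the shift changes sign, so the parent index is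
  \<open>(m + 3 shift) div 2\<close>; this is an integer shift of \<open>m\<close> exactly when \<open>3\<beta> \<in> \<int>\<close>.
\<close>
lemma dyadic_index_succ:
  assumes "3 * \<beta> \<in> \<int>"
  obtains e :: int where "\<And>x. dyadic_index \<beta> (j + 1) x = (dyadic_index \<beta> j x + e) div 2"
proof -
  have "3 * dyadic_shift \<beta> j \<in> \<int>"
    using assms by (cases "even j") (auto simp: dyadic_shift_def power_int_minus_left)
  then obtain e :: int where e: "of_int e = 3 * dyadic_shift \<beta> j"
    by (auto elim: Ints_cases)
  have "dyadic_shift \<beta> (j + 1) = - dyadic_shift \<beta> j"
    unfolding dyadic_shift_def by (simp add: power_int_add)
  then have "x / 2 powr of_int (j + 1) - dyadic_shift \<beta> (j + 1)
      = (x / 2 powr of_int j - dyadic_shift \<beta> j + of_int e) / real_of_int 2" for x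
    using e by (simp add: powr_add field_simps)
  then have "dyadic_index \<beta> (j + 1) x = \<lfloor>x / 2 powr of_int j - dyadic_shift \<beta> j + of_int e\<rfloor> div 2" for x
    unfolding dyadic_index_def by (simp only: floor_divide_real_eq_div[of 2])
  then show thesis
    by (intro that) (simp add: dyadic_index_def)
qed

lemma dyadic_index_eq_mono:
  assumes "3 * \<beta> \<in> \<int>" and "j \<le> k" and "dyadic_index \<beta> j x = dyadic_index \<beta> j y"
  shows "dyadic_index \<beta> k x = dyadic_index \<beta> k y"
  using assms(2)
proof (induction k rule: int_ge_induct)
  case base
  then show ?case using assms(3) .
next
  case (step k)
  obtain e where "\<And>x. dyadic_index \<beta> (k + 1) x = (dyadic_index \<beta> k x + e) div 2"
    using dyadic_index_succ[OF assms(1), of k] by blast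
  then show ?case using step.IH by simp
qed

lemma dyadic_box_nested:
  assumes "3 * \<beta> \<in> \<int>" and "j \<le> k" and "z \<in> dyadic_box \<beta> j m" and "z \<in> dyadic_box \<beta> k m'"
  shows "dyadic_box \<beta> j m \<subseteq> dyadic_box \<beta> k m'"
proof
  fix w assume w: "w \<in> dyadic_box \<beta> j m"
  have "dyadic_index \<beta> j (Re w) = dyadic_index \<beta> j (Re z)"
    using w assms(3) by (simp add: mem_dyadic_box_iff)
  then have "dyadic_index \<beta> k (Re w) = dyadic_index \<beta> k (Re z)"
    by (rule dyadic_index_eq_mono[OF assms(1,2)])
  then have "dyadic_index \<beta> k (Re w) = m'"
    using assms(4) by (simp add: mem_dyadic_box_iff)
  moreover have "Im w < 2 powr k"
  proof -
    have "Im w < 2 powr j"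
      using w by (simp add: mem_dyadic_box_iff)
    also have "\<dots> \<le> 2 powr k"
      using assms(2) by simp
    finally show ?thesis .
  qed
  ultimately show "w \<in> dyadic_box \<beta> k m'"
    using w by (auto simp: mem_dyadic_box_iff)
qed

lemma maximal_dyadic_boxes:
  assumes "3 * \<beta> \<in> \<int>" and bounded: "\<And>j m. (j, m) \<in> G \<Longrightarrow> j \<le> n"
  obtains S where "S \<subseteq> G" and "disjoint_family_on (\<lambda>(j, m). dyadic_box \<beta> j m) S"
    and "(\<Union>(j, m)\<in>S. dyadic_box \<beta> j m) = (\<Union>(j, m)\<in>G. dyadic_box \<beta> j m)"
proof -
  define Q where "Q = (\<lambda>(j, m). dyadic_box \<beta> j m)"
  define S where "S = {s \<in> G. \<forall>s'\<in>G. Q s \<inter> Q s' \<noteq> {} \<longrightarrow> fst s' \<le> fst s}"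
  have "disjoint_family_on Q S"
    unfolding disjoint_family_on_def
  proof (intro ballI impI equals0I)
    fix a b z assume a: "a \<in> S" and b: "b \<in> S" and "a \<noteq> b" and z: "z \<in> Q a \<inter> Q b"
    then have "fst b \<le> fst a" "fst a \<le> fst b"
      unfolding S_def by blast+
    moreover obtain j m j' m' where "a = (j, m)" "b = (j', m')" by fastforce
    ultimately show False
      using z \<open>a \<noteq> b\<close> by (simp add: Q_def mem_dyadic_box_iff)
  qed
  moreover have "\<Union>(Q ` G) \<subseteq> \<Union>(Q ` S)"
  proof
    fix z assume "z \<in> \<Union>(Q ` G)"
    then obtain j m where jm: "(j, m) \<in> G" "z \<in> dyadic_box \<beta> j m"
      unfolding Q_def by auto
    define L where "L = {k. j \<le> k \<and> (k, dyadic_index \<beta> k (Re z)) \<in> G}"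
    have "finite L"
      unfolding L_def by (rule finite_subset[of _ "{j..n}"]) (auto dest: bounded)
    moreover have "j \<in> L"
      using jm by (simp add: L_def mem_dyadic_box_iff)
    ultimately have L: "Max L \<in> L" "\<And>k'. k' \<in> L \<Longrightarrow> k' \<le> Max L"
      by (auto intro: Max_in)
    define s where "s = (Max L, dyadic_index \<beta> (Max L) (Re z))"
    have "z \<in> Q s"
    proof -
      have "Im z < 2 powr j"
        using jm(2) by (simp add: mem_dyadic_box_iff)
      also have "\<dots> \<le> 2 powr Max L"
        using L(1) by (simp add: L_def)
      finally show ?thesis
        using jm(2) by (simp add: s_def Q_def mem_dyadic_box_iff)
    qed
    moreover have "s \<in> S"
      unfolding S_def
    proof (intro CollectI conjI ballI impI)
      show "s \<in> G"
        using L(1) by (simp add: s_def L_def)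
      fix s' assume s': "s' \<in> G" "Q s \<inter> Q s' \<noteq> {}"
      obtain k' m' where s'_eq: "s' = (k', m')" by fastforce
      show "fst s' \<le> fst s"
      proof (rule ccontr)
        assume "\<not> fst s' \<le> fst s"
        then have "Max L \<le> k'"
          by (simp add: s_def s'_eq)
        moreover obtain w where "w \<in> Q s" "w \<in> Q s'"
          using s'(2) by blast
        ultimately have "Q s \<subseteq> Q s'"
          unfolding s_def s'_eq Q_def by (simp add: dyadic_box_nested[OF assms(1)])
        with \<open>z \<in> Q s\<close> have "m' = dyadic_index \<beta> k' (Re z)"
          by (auto simp: s'_eq Q_def mem_dyadic_box_iff)
        with s'(1) \<open>Max L \<le> k'\<close> L(1) have "k' \<in> L"
          by (simp add: L_def s'_eq)
        with L(2) \<open>\<not> fst s' \<le> fst s\<close> show False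
          by (simp add: s_def s'_eq)
      qed
    qed
    ultimately show "z \<in> \<Union>(Q ` S)" by blast
  qed
  then have "\<Union>(Q ` S) = \<Union>(Q ` G)"
    unfolding S_def by blast
  ultimately show thesis
    using that[of S] unfolding Q_def S_def by blast
qed

lemma Union_dyadic_boxes_sets [measurable]: "(\<Union>(j, m)\<in>X. dyadic_box \<beta> j m) \<in> sets borel"
  by (rule sets.countable_UN) (auto split: prod.split)

lemma emeasure_Union_dyadic_boxes_le:
  assumes "3 * \<beta> \<in> \<int>" and "sets M = sets borel" and "sets N = sets borel"
    and box: "\<And>j m. (j, m) \<in> G \<Longrightarrow> emeasure M (dyadic_box \<beta> j m) \<le> c * emeasure N (dyadic_box \<beta> j m)"
  shows "emeasure M (\<Union>(j, m)\<in>G. dyadic_box \<beta> j m) \<le> c * emeasure N (space N)"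
proof -
  define Q where "Q = (\<lambda>(j, m). dyadic_box \<beta> j m)"
  have Q_sets: "Q s \<in> sets M" "Q s \<in> sets N" "\<Union>(Q ` X) \<in> sets M" for s X
    using assms(2,3) Union_dyadic_boxes_sets[where X = X] by (auto simp: Q_def split: prod.split)
  have bounded_levels: "emeasure M (\<Union>(Q ` H)) \<le> c * emeasure N (space N)"
    if H: "H \<subseteq> G" and H_bounded: "\<And>j m. (j, m) \<in> H \<Longrightarrow> j \<le> n" for H n
  proof -
    obtain S where S: "S \<subseteq> H" "disjoint_family_on Q S" "\<Union>(Q ` S) = \<Union>(Q ` H)"
      by (rule maximal_dyadic_boxes[OF assms(1) H_bounded, folded Q_def])
    have "countable S" by (rule countable_subset[OF subset_UNIV]) simp
    have "emeasure M (\<Union>(Q ` H)) = (\<integral>\<^sup>+s. emeasure M (Q s) \<partial>count_space S)"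
      unfolding S(3)[symmetric] using Q_sets(1) \<open>countable S\<close> S(2) by (rule emeasure_UN_countable)
    also have "\<dots> \<le> (\<integral>\<^sup>+s. c * emeasure N (Q s) \<partial>count_space S)"
      using S(1) H box by (intro nn_integral_mono) (auto simp: Q_def)
    also have "\<dots> = c * emeasure N (\<Union>(Q ` S))"
      using Q_sets(2) \<open>countable S\<close> S(2) by (simp add: nn_integral_cmult emeasure_UN_countable)
    also have "\<dots> \<le> c * emeasure N (space N)"
      by (intro mult_left_mono emeasure_space) simp
    finally show ?thesis .
  qed
  define U where "U n = \<Union>(Q ` {s \<in> G. fst s \<le> int n})" for n
  have "incseq U"
    unfolding U_def by (intro incseq_SucI UN_mono) auto
  moreover have "(\<Union>n. U n) = \<Union>(Q ` G)"
  proof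
    show "(\<Union>n. U n) \<subseteq> \<Union>(Q ` G)"
      unfolding U_def by blast
    show "\<Union>(Q ` G) \<subseteq> (\<Union>n. U n)"
    proof
      fix z assume "z \<in> \<Union>(Q ` G)"
      then obtain s where "s \<in> G" "z \<in> Q s" by blast
      then have "z \<in> U (nat \<bar>fst s\<bar>)"
        unfolding U_def by (intro UN_I[of s]) auto
      then show "z \<in> (\<Union>n. U n)" by blast
    qed
  qed
  moreover have "range U \<subseteq> sets M"
    unfolding U_def using Q_sets(3) by blast
  ultimately have "emeasure M (\<Union>(Q ` G)) = (SUP n. emeasure M (U n))"
    by (simp add: SUP_emeasure_incseq)
  also have "\<dots> \<le> c * emeasure N (space N)"
    unfolding U_def by (intro SUP_least bounded_levels) auto
  finally show ?thesis unfolding Q_def .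
qed

lemma dyadic_max_superlevel_eq:
  "{z \<in> upper_half. t < dyadic_max \<beta> \<sigma> \<alpha> \<gamma> f z} =
   (\<Union>(j, m)\<in>{(j, m). t < wint \<alpha> \<sigma> f (dyadic_box \<beta> j m) /
                        ennpow (wmeas \<alpha> \<sigma> (dyadic_box \<beta> j m)) (1 - \<gamma> / (2 + \<alpha>))}.
      dyadic_box \<beta> j m)"
  using dyadic_box_subset_upper_half
  by (auto simp: dyadic_max_def less_SUP_iff dyadic_grid_eq dyadic_box_def upper_half_def)

lemma wmeas_eq_emeasure_density:
  assumes "\<sigma> \<in> borel_measurable borel" and "A \<in> sets borel"
  shows "wmeas \<alpha> \<sigma> A =
    emeasure (density lborel (\<lambda>z. ennreal (\<sigma> z * Im z powr \<alpha>) * indicator upper_half z)) A"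
  using assms unfolding wmeas_def upper_half_def
  by (subst emeasure_density) (auto intro!: nn_integral_cong split: split_indicator)

lemma wint_eq_emeasure_density:
  assumes "\<sigma> \<in> borel_measurable borel" and "f \<in> borel_measurable borel" and "A \<in> sets borel"
  shows "wint \<alpha> \<sigma> f A =
    emeasure (density lborel (\<lambda>z. ennreal (\<bar>f z\<bar> * \<sigma> z * Im z powr \<alpha>) * indicator upper_half z)) A"
  using assms unfolding wint_def upper_half_def
  by (subst emeasure_density) (auto intro!: nn_integral_cong split: split_indicator)

lemma wint_mono: "A \<subseteq> B \<Longrightarrow> wint \<alpha> \<sigma> f A \<le> wint \<alpha> \<sigma> f B"
  unfolding wint_def by (intro nn_integral_mono mult_left_mono) (auto split: split_indicator)

lemma wint_eq_0_if_wmeas_eq_0: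
  assumes "\<sigma> \<in> borel_measurable borel" and "\<forall>z\<in>upper_half. 0 \<le> \<sigma> z"
    and "f \<in> borel_measurable borel" and "A \<in> sets borel" and "wmeas \<alpha> \<sigma> A = 0"
  shows "wint \<alpha> \<sigma> f A = 0"
proof -
  have "AE z in lborel. ennreal (\<sigma> z * Im z powr \<alpha>) * indicator (A \<inter> upper_half) z = 0"
    using assms unfolding wmeas_def upper_half_def by (subst (asm) nn_integral_0_iff_AE) auto
  then have "AE z in lborel. ennreal (\<bar>f z\<bar> * \<sigma> z * Im z powr \<alpha>) * indicator (A \<inter> upper_half) z = 0"
  proof (rule eventually_mono)
    fix z assume "ennreal (\<sigma> z * Im z powr \<alpha>) * indicator (A \<inter> upper_half) z = 0"
    moreover have "z \<in> upper_half \<Longrightarrow> 0 \<le> \<sigma> z * Im z powr \<alpha>"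
      using assms(2) by simp
    ultimately show "ennreal (\<bar>f z\<bar> * \<sigma> z * Im z powr \<alpha>) * indicator (A \<inter> upper_half) z = 0"
      by (auto simp: mult.assoc ennreal_eq_0_iff split: split_indicator)
  qed
  then show ?thesis
    using assms unfolding wint_def upper_half_def by (subst nn_integral_0_iff_AE) auto
qed

text \<open>Split \<open>m = m\<^sup>p m\<^sup>1\<^sup>-\<^sup>p\<close> and bound \<open>m\<^sup>p < w/t \<le> F/t\<close> in both factors.\<close>
lemma le_of_less_fractional_average:
  fixes w m :: ennreal
  assumes "t > 0" and "F \<ge> 0" and "0 < p" and "p \<le> 1" and "w \<le> ennreal F"
    and "m = 0 \<Longrightarrow> w = 0" and "ennreal t < w / ennpow m p"
  shows "m \<le> ennreal ((F / t) powr (1 / p - 1) / t) * w"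
proof -
  have "m \<noteq> top" "m \<noteq> 0"
    using assms(6,7) by (auto simp: ennpow_def)
  then obtain mr where mr: "m = ennreal mr" "mr > 0"
    by (cases m) (auto simp: less_le)
  obtain wr where wr: "w = ennreal wr" "0 \<le> wr" "wr \<le> F"
    using assms(2,5) by (cases w) (auto simp: top_unique ennreal_le_iff)
  have "w / ennpow m p = ennreal (wr / mr powr p)"
    using mr wr by (simp add: ennpow_def divide_ennreal)
  then have avg: "mr powr p < wr / t"
    using assms(1,7) wr mr by (simp add: ennreal_less_iff field_simps)
  have "p * (1 / p - 1) = 1 - p"
    using assms(3) by (simp add: field_simps)
  then have "mr powr (1 - p) = (mr powr p) powr (1 / p - 1)"
    by (simp only: powr_powr)
  also have "\<dots> \<le> (F / t) powr (1 / p - 1)"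
    using assms(1,3,4) avg wr by (intro powr_mono2) (auto simp: divide_right_mono field_simps)
  finally have "mr = mr powr p * mr powr (1 - p) \<and> mr powr (1 - p) \<le> (F / t) powr (1 / p - 1)"
    using mr by (simp add: powr_add[symmetric])
  then have "mr \<le> (wr / t) * (F / t) powr (1 / p - 1)"
    using avg wr assms(1) by (metis less_imp_le mult_mono powr_ge_zero divide_nonneg_pos)
  then show ?thesis
    using mr wr assms(1) by (simp add: ennreal_mult[symmetric] mult.commute)
qed

lemma ennreal_mult_eq_ennpow:
  assumes "t > 0" and "F \<ge> 0" and "p > 0"
  shows "ennreal ((F / t) powr (1 / p - 1) / t) * ennreal F = ennpow (ennreal (1 / t) * ennreal F) (1 / p)"
proof -
  have "(F / t) powr (1 / p - 1) / t * F = (F / t) powr (1 / p)"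
  proof (cases "F = 0")
    case False
    then have "(F / t) powr (1 / p - 1) / t * F = (F / t) powr (1 / p - 1) * (F / t) powr 1"
      using assms by simp
    also have "\<dots> = (F / t) powr (1 / p)"
      by (simp only: powr_add[symmetric]) simp
    finally show ?thesis .
  qed simp
  then show ?thesis
    using assms by (simp add: ennpow_def ennreal_mult[symmetric])
qed

lemma wmeas_dyadic_max_superlevel_le:
  assumes "3 * \<beta> \<in> \<int>" and "0 \<le> \<gamma>" and "\<gamma> < 2 + \<alpha>" and "t > 0"
    and \<sigma>: "\<sigma> \<in> borel_measurable borel" "\<forall>z\<in>upper_half. 0 \<le> \<sigma> z"
    and f: "f \<in> borel_measurable borel"
  shows "wmeas \<alpha> \<sigma> {z \<in> upper_half. ennreal t < dyadic_max \<beta> \<sigma> \<alpha> \<gamma> f z}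
    \<le> ennpow (ennreal (1 / t) * wint \<alpha> \<sigma> f UNIV) ((2 + \<alpha>) / (2 + \<alpha> - \<gamma>))"
proof (cases "wint \<alpha> \<sigma> f UNIV")
  case (real F)
  define p where "p = 1 - \<gamma> / (2 + \<alpha>)"
  have p: "0 < p" "p \<le> 1" "(2 + \<alpha>) / (2 + \<alpha> - \<gamma>) = 1 / p"
    using assms(2,3) unfolding p_def by (auto simp: field_simps)
  define M where "M = density lborel (\<lambda>z. ennreal (\<sigma> z * Im z powr \<alpha>) * indicator upper_half z)"
  define N where "N = density lborel (\<lambda>z. ennreal (\<bar>f z\<bar> * \<sigma> z * Im z powr \<alpha>) * indicator upper_half z)"
  have M: "wmeas \<alpha> \<sigma> A = emeasure M A" and N: "wint \<alpha> \<sigma> f A = emeasure N A"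
    if "A \<in> sets borel" for A
    using that \<sigma>(1) f by (simp_all add: M_def N_def wmeas_eq_emeasure_density wint_eq_emeasure_density)
  define G where "G = {(j, m). ennreal t < wint \<alpha> \<sigma> f (dyadic_box \<beta> j m) /
                                 ennpow (wmeas \<alpha> \<sigma> (dyadic_box \<beta> j m)) p}"
  define K where "K = (F / t) powr (1 / p - 1) / t"
  have "wmeas \<alpha> \<sigma> (dyadic_box \<beta> j m) \<le> ennreal K * wint \<alpha> \<sigma> f (dyadic_box \<beta> j m)"
    if "(j, m) \<in> G" for j m
    unfolding K_def
  proof (rule le_of_less_fractional_average[OF \<open>t > 0\<close> real(1) p(1,2)])
    show "wint \<alpha> \<sigma> f (dyadic_box \<beta> j m) \<le> ennreal F"
      unfolding real(2)[symmetric] by (rule wint_mono) simp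
    show "wmeas \<alpha> \<sigma> (dyadic_box \<beta> j m) = 0 \<Longrightarrow> wint \<alpha> \<sigma> f (dyadic_box \<beta> j m) = 0"
      by (rule wint_eq_0_if_wmeas_eq_0[OF \<sigma> f dyadic_box_sets])
    show "ennreal t < wint \<alpha> \<sigma> f (dyadic_box \<beta> j m) / ennpow (wmeas \<alpha> \<sigma> (dyadic_box \<beta> j m)) p"
      using that by (simp add: G_def)
  qed
  then have box: "emeasure M (dyadic_box \<beta> j m) \<le> ennreal K * emeasure N (dyadic_box \<beta> j m)"
    if "(j, m) \<in> G" for j m
    using that by (simp add: M N)
  have "wmeas \<alpha> \<sigma> {z \<in> upper_half. ennreal t < dyadic_max \<beta> \<sigma> \<alpha> \<gamma> f z}
      = emeasure M (\<Union>(j, m)\<in>G. dyadic_box \<beta> j m)"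
    unfolding dyadic_max_superlevel_eq p_def[symmetric] G_def[symmetric]
    by (rule M[OF Union_dyadic_boxes_sets])
  also have "\<dots> \<le> ennreal K * emeasure N (space N)"
    by (rule emeasure_Union_dyadic_boxes_le[OF assms(1) _ _ box]) (simp_all add: M_def N_def)
  also have "emeasure N (space N) = ennreal F"
    using N[of UNIV] real(2) by (simp add: N_def)
  also have "ennreal K * ennreal F = ennpow (ennreal (1 / t) * wint \<alpha> \<sigma> f UNIV) (1 / p)"
    unfolding K_def real(2) using \<open>t > 0\<close> real(1) p(1) by (rule ennreal_mult_eq_ennpow)
  finally show ?thesis
    by (simp add: p(3))
qed (use \<open>t > 0\<close> in \<open>simp add: ennpow_def ennreal_mult_top\<close>)

theorem proposition4p2:
  fixes \<alpha> \<gamma> \<beta> :: real and \<sigma> :: "complex \<Rightarrow> real"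
  assumes "\<alpha> > -1" and "0 \<le> \<gamma>" and "\<gamma> < 2 + \<alpha>" and "\<beta> \<in> {0, 1/3}"
    and "is_weight \<sigma>"
  shows "\<exists>C::real. C > 0 \<and>
    (\<forall>(f :: complex \<Rightarrow> real) (t::real). f \<in> borel_measurable lborel \<longrightarrow> t > 0 \<longrightarrow>
       wmeas \<alpha> \<sigma> {z \<in> upper_half. dyadic_max \<beta> \<sigma> \<alpha> \<gamma> f z > ennreal t}
       \<le> ennreal C * ennpow (ennreal (1 / t) * wint \<alpha> \<sigma> f UNIV) ((2 + \<alpha>) / (2 + \<alpha> - \<gamma>)))"
proof (intro exI[of _ 1] conjI allI impI)
  fix f :: "complex \<Rightarrow> real" and t :: real
  assume f: "f \<in> borel_measurable lborel" and t: "t > 0"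
  have "3 * \<beta> = 0 \<or> 3 * \<beta> = 1"
    using assms(4) by auto
  then have "3 * \<beta> \<in> \<int>"
    by auto
  moreover have "\<sigma> \<in> borel_measurable borel" "\<forall>z\<in>upper_half. 0 \<le> \<sigma> z"
    using assms(5) unfolding is_weight_def by auto
  ultimately show "wmeas \<alpha> \<sigma> {z \<in> upper_half. ennreal t < dyadic_max \<beta> \<sigma> \<alpha> \<gamma> f z}
      \<le> ennreal 1 * ennpow (ennreal (1 / t) * wint \<alpha> \<sigma> f UNIV) ((2 + \<alpha>) / (2 + \<alpha> - \<gamma>))"
    using wmeas_dyadic_max_superlevel_le[OF _ assms(2,3) t] f by simp
qed simp

end
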